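(* Let $n,r,s,t\in\mathbb N$, let $G_{n,r,s,t}=(V,E,c)$ be the graph described in the context, and let $F\subseteq E$ be functional. Then the set of optimal edges for the subgraph $G_F$ (i.e. the set of edges $(u,v)\in F$ with $c(u,v)+y(v)=y(u)$, where $y(x)$ denotes the cost of a shortest path from $x$ to the target $\mathsf t$ in $G_F$) is exactly $\mathcal B_F$.
   Context: The graph $G_{n,r,s,t}$. Let $[m]=\{1,\dots,m\}$ and $\epsilon=1/(rs)$. Vertices: a target $\mathsf t$ (also denoted $u_{n+1}$ and $w_{n+1}$), $u_i,w_i$ for $i\in[n]$, $a_{i,j,k}$ for $i\in[n],j\in[r],k\in[s]$, and $b_{i,j}$ for $i\in[n],j\in[rs]$. Edges (for all $i\in[n]$; "$t$ copies" means $t$ parallel edges indexed by $\ell\in[t]$): - $a^1_{i,j,k}:a_{i,j,k}\to a_{i,j,k+1}$, cost $0$ ($j\in[r],k\in[s-1]$); $a^1_{i,j,s}:a_{i,j,s}\to b_{i,1}$, cost $0$; - $a^{0,\ell}_{i,j,k}:a_{i,j,k}\to u_{i+1}$, cost $2^{2i+1}+(k-1)\epsilon$, $t$ copies ($j\in[r],k\in[s]$); - $b^1_{i,j}:b_{i,j}\to b_{i,j+1}$, cost $0$ ($j\in[rs-1]$); $b^1_{i,rs}:b_{i,rs}\to w_{i+1}$, cost $0$; - $b^{0,\ell}_{i,j}:b_{i,j}\to u_{i+1}$, cost $2^{2i+1}+1+(j-1)\epsilon$, $t$ copies ($j\in[rs]$); - $u^{1,\ell}_i:u_i\to b_{i,1}$,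 cost $0$, $t$ copies; $u^{0,\ell}_i:u_i\to u_{i+1}$, cost $2^{2i}$, $t$ copies; - $w^{j,\ell}_i:w_i\to a_{i,j,1}$, cost $0$, $t$ copies for each $j\in[r]$; $w^{0,\ell}_i:w_i\to w_{i+1}$, cost $2^{2i}$, $t$ copies. Edge groups: ${\bf a}^1_{i,j}=\{a^1_{i,j,k}:k\in[s]\}$, ${\bf a}^0_{i,j,k}=\{a^{0,\ell}_{i,j,k}:\ell\in[t]\}$, ${\bf b}^1_i=\{b^1_{i,j}:j\in[rs]\}$, ${\bf b}^0_{i,j}=\{b^{0,\ell}_{i,j}:\ell\in[t]\}$, ${\bf u}^1_i=\{u^{1,\ell}_i\}_\ell$, ${\bf u}^0_i=\{u^{0,\ell}_i\}_\ell$, ${\bf w}^j_i=\{w^{j,\ell}_i\}_\ell$ ($j\in[r]$), ${\bf w}^0_i=\{w^{0,\ell}_i\}_\ell$. The multi-edges are the sets ${\bf u}^1_i,{\bf u}^0_i,{\bf w}^0_i,{\bf b}^0_{i,j},{\bf a}^0_{i,j,k},{\bf w}^j_i$. A set $F\subseteq E$ is functional if it intersects every multi-edge. Write ${\bf a}^1_i\sqsubseteq F$ if ${\bf a}^1_{i,j}\subseteq F$ for some $j\in[r]$. Define $last({\bf b}^1_i,F)=\max(\{0\}\cup\{j\in[rs]:b^1_{i,j}\notin F\})$, $last({\bf a}^1_{i,j},F)=\max(\{0\}\cup\{k\in[s]:a^1_{i,j,k}\notin F\})$, and $reset(F)=\max(\{0\}\cup\{i\in[n]:{\bf b}^1_i\subseteq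 F\text{ and not }{\bf a}^1_i\sqsubseteq F\})$. For functional $F$, $\mathcal B_F\subseteq F$ consists exactly of the following edges: (i) for each $i>reset(F)$ with ${\bf b}^1_i\subseteq F$: all $b^1_{i,j}$ ($j\in[rs]$); for $j\in[r],k\in[s]$: $a^1_{i,j,k}$ if $k>last({\bf a}^1_{i,j},F)$, and ${\bf a}^0_{i,j,k}\cap F$ otherwise; ${\bf u}^1_i\cap F$; ${\bf w}^j_i\cap F$ for every $j$ with ${\bf a}^1_{i,j}\subseteq F$. (ii) for each $i>reset(F)$ with ${\bf b}^1_i\not\subseteq F$: for $j\in[rs]$: $b^1_{i,j}$ if $j>last({\bf b}^1_i,F)$, and ${\bf b}^0_{i,j}\cap F$ otherwise; ${\bf a}^0_{i,j,k}\cap F$ for all $j,k$; ${\bf u}^0_i\cap F$; ${\bf w}^0_i\cap F$. (iii) for $i=reset(F)$ (if $\ge1$): all $b^1_{i,j}$; for $j\in[r],k\in[s]$: $a^1_{i,j,k}$ if $k>last({\bf a}^1_{i,j},F)$, and ${\bf a}^0_{i,j,k}\cap F$ otherwise; ${\bf u}^1_i\cap F$; ${\bf w}^0_i\cap F$. (iv) for each $i<reset(F)$: ${\bf b}^0_{i,j}\cap F$ for all $j\in[rs]$; ${\bf a}^0_{i,j,k}\cap F$ for all $j,k$; ${\bf u}^0_i\cap F$; ${\bf w}^j_i\cap F$ for all $j\in[r]$. *)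

theory Defs
  imports Complex_Main "HOL-Library.Extended_Real"
begin

text \<open>Vertices. Tgt is the target t (= u_{n+1} = w_{n+1}).\<close>
datatype vtx = Tgt | U nat | W nat | A nat nat nat | B nat nat

text \<open>Edges, carrying their indices (the last nat is the copy index l where applicable).
  EA1 i j k = a^1_{i,j,k};  EA0 i j k l = a^{0,l}_{i,j,k};  EB1 i j = b^1_{i,j};
  EB0 i j l = b^{0,l}_{i,j};  EU1 i l = u^{1,l}_i;  EU0 i l = u^{0,l}_i;
  EWj i j l = w^{j,l}_i;  EW0 i l = w^{0,l}_i.\<close>
datatype edge = EA1 nat nat nat | EA0 nat nat nat nat | EB1 nat nat | EB0 nat nat nat
  | EU1 nat nat | EU0 nat nat | EWj nat nat nat | EW0 nat nat

definition uv :: "nat \<Rightarrow> nat \<Rightarrow> vtx" where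
  "uv n m = (if m = Suc n then Tgt else U m)"

definition wv :: "nat \<Rightarrow> nat \<Rightarrow> vtx" where
  "wv n m = (if m = Suc n then Tgt else W m)"

fun src :: "edge \<Rightarrow> vtx" where
  "src (EA1 i j k) = A i j k"
| "src (EA0 i j k l) = A i j k"
| "src (EB1 i j) = B i j"
| "src (EB0 i j l) = B i j"
| "src (EU1 i l) = U i"
| "src (EU0 i l) = U i"
| "src (EWj i j l) = W i"
| "src (EW0 i l) = W i"

fun tgt :: "nat \<Rightarrow> nat \<Rightarrow> nat \<Rightarrow> edge \<Rightarrow> vtx" where
  "tgt n r s (EA1 i j k) = (if k < s then A i j (Suc k) else B i 1)"
| "tgt n r s (EA0 i j k l) = uv n (Suc i)"
| "tgt n r s (EB1 i j) = (if j < r * s then B i (Suc j) else wv n (Suc i))"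
| "tgt n r s (EB0 i j l) = uv n (Suc i)"
| "tgt n r s (EU1 i l) = B i 1"
| "tgt n r s (EU0 i l) = uv n (Suc i)"
| "tgt n r s (EWj i j l) = A i j 1"
| "tgt n r s (EW0 i l) = wv n (Suc i)"

definition eps :: "nat \<Rightarrow> nat \<Rightarrow> real" where
  "eps r s = 1 / (real r * real s)"

fun cost :: "nat \<Rightarrow> nat \<Rightarrow> edge \<Rightarrow> real" where
  "cost r s (EA1 i j k) = 0"
| "cost r s (EA0 i j k l) = 2 ^ (2 * i + 1) + (real k - 1) * eps r s"
| "cost r s (EB1 i j) = 0"
| "cost r s (EB0 i j l) = 2 ^ (2 * i + 1) + 1 + (real j - 1) * eps r s"
| "cost r s (EU1 i l) = 0"
| "cost r s (EU0 i l) = 2 ^ (2 * i)"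
| "cost r s (EWj i j l) = 0"
| "cost r s (EW0 i l) = 2 ^ (2 * i)"

definition edges :: "nat \<Rightarrow> nat \<Rightarrow> nat \<Rightarrow> nat \<Rightarrow> edge set" where
  "edges n r s t =
     {EA1 i j k | i j k. i \<in> {1..n} \<and> j \<in> {1..r} \<and> k \<in> {1..s}}
   \<union> {EA0 i j k l | i j k l. i \<in> {1..n} \<and> j \<in> {1..r} \<and> k \<in> {1..s} \<and> l \<in> {1..t}}
   \<union> {EB1 i j | i j. i \<in> {1..n} \<and> j \<in> {1..r*s}}
   \<union> {EB0 i j l | i j l. i \<in> {1..n} \<and> j \<in> {1..r*s} \<and> l \<in> {1..t}}
   \<union> {EU1 i l | i l. i \<in> {1..n} \<and> l \<in> {1..t}}
   \<union> {EU0 i l | i l. i \<in> {1..n} \<and> l \<in> {1..t}}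
   \<union> {EWj i j l | i j l. i \<in> {1..n} \<and> j \<in> {1..r} \<and> l \<in> {1..t}}
   \<union> {EW0 i l | i l. i \<in> {1..n} \<and> l \<in> {1..t}}"

definition a1grp :: "nat \<Rightarrow> nat \<Rightarrow> nat \<Rightarrow> edge set" where
  "a1grp s i j = {EA1 i j k | k. k \<in> {1..s}}"
definition a0grp :: "nat \<Rightarrow> nat \<Rightarrow> nat \<Rightarrow> nat \<Rightarrow> edge set" where
  "a0grp t i j k = {EA0 i j k l | l. l \<in> {1..t}}"
definition b1grp :: "nat \<Rightarrow> nat \<Rightarrow> nat \<Rightarrow> edge set" where
  "b1grp r s i = {EB1 i j | j. j \<in> {1..r*s}}"
definition b0grp :: "nat \<Rightarrow> nat \<Rightarrow> nat \<Rightarrow> edge set" where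
  "b0grp t i j = {EB0 i j l | l. l \<in> {1..t}}"
definition u1grp :: "nat \<Rightarrow> nat \<Rightarrow> edge set" where
  "u1grp t i = {EU1 i l | l. l \<in> {1..t}}"
definition u0grp :: "nat \<Rightarrow> nat \<Rightarrow> edge set" where
  "u0grp t i = {EU0 i l | l. l \<in> {1..t}}"
definition wjgrp :: "nat \<Rightarrow> nat \<Rightarrow> nat \<Rightarrow> edge set" where
  "wjgrp t i j = {EWj i j l | l. l \<in> {1..t}}"
definition w0grp :: "nat \<Rightarrow> nat \<Rightarrow> edge set" where
  "w0grp t i = {EW0 i l | l. l \<in> {1..t}}"

definition multiedges :: "nat \<Rightarrow> nat \<Rightarrow> nat \<Rightarrow> nat \<Rightarrow> edge set set" where
  "multiedges n r s t =
     {u1grp t i | i. i \<in> {1..n}} \<union> {u0grp t i | i. i \<in> {1..n}} \<union> {w0grp t i | i. i \<in> {1..n}}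
   \<union> {b0grp t i j | i j. i \<in> {1..n} \<and> j \<in> {1..r*s}}
   \<union> {a0grp t i j k | i j k. i \<in> {1..n} \<and> j \<in> {1..r} \<and> k \<in> {1..s}}
   \<union> {wjgrp t i j | i j. i \<in> {1..n} \<and> j \<in> {1..r}}"

definition functional :: "nat \<Rightarrow> nat \<Rightarrow> nat \<Rightarrow> nat \<Rightarrow> edge set \<Rightarrow> bool" where
  "functional n r s t F \<longleftrightarrow> F \<subseteq> edges n r s t \<and> (\<forall>M \<in> multiedges n r s t. M \<inter> F \<noteq> {})"

definition a1sq :: "nat \<Rightarrow> nat \<Rightarrow> nat \<Rightarrow> edge set \<Rightarrow> bool" where
  "a1sq r s i F \<longleftrightarrow> (\<exists>j \<in> {1..r}. a1grp s i j \<subseteq> F)"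

definition lastB :: "nat \<Rightarrow> nat \<Rightarrow> nat \<Rightarrow> edge set \<Rightarrow> nat" where
  "lastB r s i F = Max ({0} \<union> {j \<in> {1..r*s}. EB1 i j \<notin> F})"

definition lastA :: "nat \<Rightarrow> nat \<Rightarrow> nat \<Rightarrow> edge set \<Rightarrow> nat" where
  "lastA s i j F = Max ({0} \<union> {k \<in> {1..s}. EA1 i j k \<notin> F})"

definition reset :: "nat \<Rightarrow> nat \<Rightarrow> nat \<Rightarrow> edge set \<Rightarrow> nat" where
  "reset n r s F = Max ({0} \<union> {i \<in> {1..n}. b1grp r s i \<subseteq> F \<and> \<not> a1sq r s i F})"

definition BFi :: "nat \<Rightarrow> nat \<Rightarrow> nat \<Rightarrow> nat \<Rightarrow> edge set \<Rightarrow> nat \<Rightarrow> edge set" where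
  "BFi n r s t F i =
    (if i > reset n r s F \<and> b1grp r s i \<subseteq> F then
       b1grp r s i
       \<union> {EA1 i j k | j k. j \<in> {1..r} \<and> k \<in> {1..s} \<and> k > lastA s i j F}
       \<union> (\<Union>{a0grp t i j k \<inter> F | j k. j \<in> {1..r} \<and> k \<in> {1..s} \<and> \<not> k > lastA s i j F})
       \<union> (u1grp t i \<inter> F)
       \<union> (\<Union>{wjgrp t i j \<inter> F | j. j \<in> {1..r} \<and> a1grp s i j \<subseteq> F})
     else if i > reset n r s F then
       {EB1 i j | j. j \<in> {1..r*s} \<and> j > lastB r s i F}
       \<union> (\<Union>{b0grp t i j \<inter> F | j. j \<in> {1..r*s} \<and> \<not> j > lastB r s i F})
       \<union> (\<Union>{a0grp t i j k \<inter> F | j k. j \<in> {1..r} \<and> k \<in> {1..s}})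
       \<union> (u0grp t i \<inter> F)
       \<union> (w0grp t i \<inter> F)
     else if i = reset n r s F then
       b1grp r s i
       \<union> {EA1 i j k | j k. j \<in> {1..r} \<and> k \<in> {1..s} \<and> k > lastA s i j F}
       \<union> (\<Union>{a0grp t i j k \<inter> F | j k. j \<in> {1..r} \<and> k \<in> {1..s} \<and> \<not> k > lastA s i j F})
       \<union> (u1grp t i \<inter> F)
       \<union> (w0grp t i \<inter> F)
     else
       (\<Union>{b0grp t i j \<inter> F | j. j \<in> {1..r*s}})
       \<union> (\<Union>{a0grp t i j k \<inter> F | j k. j \<in> {1..r} \<and> k \<in> {1..s}})
       \<union> (u0grp t i \<inter> F)
       \<union> (\<Union>{wjgrp t i j \<inter> F | j. j \<in> {1..r}}))"

definition BF :: "nat \<Rightarrow> nat \<Rightarrow> nat \<Rightarrow> nat \<Rightarrow> edge set \<Rightarrow> edge set" where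
  "BF n r s t F = (\<Union>i \<in> {1..n}. BFi n r s t F i)"

inductive path :: "nat \<Rightarrow> nat \<Rightarrow> nat \<Rightarrow> edge set \<Rightarrow> vtx \<Rightarrow> edge list \<Rightarrow> bool"
  for n r s F where
  path_nil: "path n r s F Tgt []"
| path_cons: "e \<in> F \<Longrightarrow> src e = x \<Longrightarrow> path n r s F (tgt n r s e) es \<Longrightarrow> path n r s F x (e # es)"

text \<open>y(x): cost of a shortest path from x to the target in G_F (\<infinity> if none).\<close>
definition dist :: "nat \<Rightarrow> nat \<Rightarrow> nat \<Rightarrow> edge set \<Rightarrow> vtx \<Rightarrow> ereal" where
  "dist n r s F x = Inf {ereal (sum_list (map (cost r s) es)) | es. path n r s F x es}"

definition optimal_edges :: "nat \<Rightarrow> nat \<Rightarrow> nat \<Rightarrow> edge set \<Rightarrow> edge set" where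
  "optimal_edges n r s F =
     {e \<in> F. ereal (cost r s e) + dist n r s F (tgt n r s e) = dist n r s F (src e)}"

end

theory Submission
  imports Defs
begin

text \<open>
  A shortest-path certificate. The distances y are given in closed form: sums of level costs 4^m,
  plus offsets 2 4^i + (k-1)\<epsilon> resp. 2 4^i + 1 + (j-1)\<epsilon> along the a- and b-chains of level i.
  Edge by edge, every edge of F has nonnegative reduced cost c(u,v) + y(v) - y(u), with equality
  exactly on B_F. Every vertex other than the target has an outgoing edge in B_F, and all edges
  decrease a rank function, so following B_F reaches the target along a path of cost y. Hence y is
  the shortest-path distance, and the optimal edges are exactly the tight ones, i.e. B_F.
\<close>

lemma finite_last_failing_set: "finite ({0} \<union> {k \<in> {1..m::nat}. \<not> P k})"
  by simp

lemma last_failing_le: "Max ({0} \<union> {k \<in> {1..m::nat}. \<not> P k}) \<le> m"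
  using finite_last_failing_set by (subst Max_le_iff) auto

lemma last_failing_holds:
  fixes k m :: nat
  assumes "k \<le> m" "Max ({0} \<union> {k \<in> {1..m}. \<not> P k}) < k"
  shows "P k"
proof (rule ccontr)
  assume "\<not> P k"
  with assms have "k \<le> Max ({0} \<union> {k \<in> {1..m}. \<not> P k})"
    by (intro Max_ge[OF finite_last_failing_set]) auto
  with assms(2) show False by linarith
qed

lemma last_failing_neq:
  fixes k m :: nat
  assumes "1 \<le> k" "P k"
  shows "Max ({0} \<union> {k \<in> {1..m}. \<not> P k}) \<noteq> k"
proof
  assume last: "Max ({0} \<union> {k \<in> {1..m}. \<not> P k}) = k"
  have "Max ({0} \<union> {k \<in> {1..m}. \<not> P k}) \<in> {0} \<union> {k \<in> {1..m}. \<not> P k}"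
    by (rule Max_in[OF finite_last_failing_set]) simp
  with assms last show False by simp
qed

lemma last_failing_eq_0_iff:
  "Max ({0} \<union> {k \<in> {1..m::nat}. \<not> P k}) = 0 \<longleftrightarrow> (\<forall>k \<in> {1..m}. P k)"
proof
  assume last: "Max ({0} \<union> {k \<in> {1..m}. \<not> P k}) = 0"
  show "\<forall>k \<in> {1..m}. P k"
  proof
    fix k assume k: "k \<in> {1..m}"
    then have "Max ({0} \<union> {k \<in> {1..m}. \<not> P k}) < k" unfolding last by simp
    with k show "P k" by (intro last_failing_holds[of k m P]) auto
  qed
next
  assume "\<forall>k \<in> {1..m}. P k"
  then have "{k \<in> {1..m}. \<not> P k} = {}" by auto
  then show "Max ({0} \<union> {k \<in> {1..m}. \<not> P k}) = 0"
    by (simp only: Un_empty_right Max_singleton)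
qed

lemma lastA_le: "lastA s i j F \<le> s"
  unfolding lastA_def by (rule last_failing_le)

lemma lastA_less_imp_mem: "k \<le> s \<Longrightarrow> lastA s i j F < k \<Longrightarrow> EA1 i j k \<in> F"
  unfolding lastA_def by (rule last_failing_holds[where P = "\<lambda>k. EA1 i j k \<in> F"])

lemma lastA_neq: "1 \<le> k \<Longrightarrow> EA1 i j k \<in> F \<Longrightarrow> lastA s i j F \<noteq> k"
  unfolding lastA_def by (rule last_failing_neq[where P = "\<lambda>k. EA1 i j k \<in> F"])

lemma lastA_eq_0_iff: "lastA s i j F = 0 \<longleftrightarrow> a1grp s i j \<subseteq> F"
  unfolding lastA_def last_failing_eq_0_iff[where P = "\<lambda>k. EA1 i j k \<in> F"] a1grp_def
  by blast

lemma lastB_le: "lastB r s i F \<le> r * s"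
  unfolding lastB_def by (rule last_failing_le)

lemma lastB_less_imp_mem: "j \<le> r * s \<Longrightarrow> lastB r s i F < j \<Longrightarrow> EB1 i j \<in> F"
  unfolding lastB_def by (rule last_failing_holds[where P = "\<lambda>j. EB1 i j \<in> F"])

lemma lastB_neq: "1 \<le> j \<Longrightarrow> EB1 i j \<in> F \<Longrightarrow> lastB r s i F \<noteq> j"
  unfolding lastB_def by (rule last_failing_neq[where P = "\<lambda>j. EB1 i j \<in> F"])

lemma lastB_eq_0_iff: "lastB r s i F = 0 \<longleftrightarrow> b1grp r s i \<subseteq> F"
  unfolding lastB_def last_failing_eq_0_iff[where P = "\<lambda>j. EB1 i j \<in> F"] b1grp_def
  by blast

subsection \<open>Potentials and shortest paths\<close>

lemma potential_le_path_cost: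
  assumes "y Tgt = 0"
    and feasible: "\<And>e. e \<in> F \<Longrightarrow> y (src e) \<le> cost r s e + y (tgt n r s e)"
    and "path n r s F x es"
  shows "y x \<le> sum_list (map (cost r s) es)"
  using assms(3)
proof (induction rule: path.induct)
  case path_nil
  then show ?case using assms(1) by simp
next
  case (path_cons e x es)
  then show ?case using feasible[of e] by simp
qed

lemma dist_eq_potential:
  fixes y :: "vtx \<Rightarrow> real" and rank :: "vtx \<Rightarrow> nat"
  assumes y_Tgt: "y Tgt = 0"
    and feasible: "\<And>e. e \<in> F \<Longrightarrow> y (src e) \<le> cost r s e + y (tgt n r s e)"
    and descent: "\<And>x. V x \<Longrightarrow> x \<noteq> Tgt \<Longrightarrow> \<exists>e \<in> F. src e = x
        \<and> cost r s e + y (tgt n r s e) = y x \<and> V (tgt n r s e) \<and> rank (tgt n r s e) < rank x"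
    and "V x"
  shows "dist n r s F x = ereal (y x)"
proof -
  have "\<exists>es. path n r s F x es \<and> sum_list (map (cost r s) es) = y x"
    using \<open>V x\<close>
  proof (induction "rank x" arbitrary: x rule: less_induct)
    case less
    show ?case
    proof (cases "x = Tgt")
      case True
      with y_Tgt show ?thesis by (intro exI[of _ "[]"]) (simp add: path.path_nil)
    next
      case False
      then obtain e where e: "e \<in> F" "src e = x" "cost r s e + y (tgt n r s e) = y x"
        "V (tgt n r s e)" "rank (tgt n r s e) < rank x"
        using descent[OF less.prems False] by blast
      then obtain es where "path n r s F (tgt n r s e) es"
        "sum_list (map (cost r s) es) = y (tgt n r s e)"
        using less.hyps[of "tgt n r s e"] by blast
      with e show ?thesis by (intro exI[of _ "e # es"]) (simp add: path.path_cons)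
    qed
  qed
  then obtain es where es: "path n r s F x es" "sum_list (map (cost r s) es) = y x" by blast
  show ?thesis unfolding dist_def
  proof (rule antisym)
    show "Inf {ereal (sum_list (map (cost r s) es)) |es. path n r s F x es} \<le> ereal (y x)"
      using es by (intro Inf_lower) (metis (mono_tags, lifting) mem_Collect_eq)
    show "ereal (y x) \<le> Inf {ereal (sum_list (map (cost r s) es)) |es. path n r s F x es}"
    proof (rule Inf_greatest)
      fix z assume "z \<in> {ereal (sum_list (map (cost r s) es)) |es. path n r s F x es}"
      then obtain es' where "z = ereal (sum_list (map (cost r s) es'))" "path n r s F x es'"
        by blast
      with potential_le_path_cost[of y F r s n] y_Tgt feasible show "ereal (y x) \<le> z" by simp
    qed
  qed
qed

lemma optimal_edges_eq_tight_edges: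
  assumes "\<And>e. e \<in> F \<Longrightarrow> dist n r s F (src e) = ereal (y (src e))
      \<and> dist n r s F (tgt n r s e) = ereal (y (tgt n r s e))"
  shows "optimal_edges n r s F = {e \<in> F. cost r s e + y (tgt n r s e) = y (src e)}"
  unfolding optimal_edges_def using assms by auto

lemma mem_edges_iff:
  "EA1 i j k \<in> edges n r s t \<longleftrightarrow> i \<in> {1..n} \<and> j \<in> {1..r} \<and> k \<in> {1..s}"
  "EA0 i j k l \<in> edges n r s t \<longleftrightarrow> i \<in> {1..n} \<and> j \<in> {1..r} \<and> k \<in> {1..s} \<and> l \<in> {1..t}"
  "EB1 i j \<in> edges n r s t \<longleftrightarrow> i \<in> {1..n} \<and> j \<in> {1..r*s}"
  "EB0 i j l \<in> edges n r s t \<longleftrightarrow> i \<in> {1..n} \<and> j \<in> {1..r*s} \<and> l \<in> {1..t}"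
  "EU1 i l \<in> edges n r s t \<longleftrightarrow> i \<in> {1..n} \<and> l \<in> {1..t}"
  "EU0 i l \<in> edges n r s t \<longleftrightarrow> i \<in> {1..n} \<and> l \<in> {1..t}"
  "EWj i j l \<in> edges n r s t \<longleftrightarrow> i \<in> {1..n} \<and> j \<in> {1..r} \<and> l \<in> {1..t}"
  "EW0 i l \<in> edges n r s t \<longleftrightarrow> i \<in> {1..n} \<and> l \<in> {1..t}"
  by (auto simp: edges_def)

fun level :: "edge \<Rightarrow> nat" where
  "level (EA1 i j k) = i" | "level (EA0 i j k l) = i" | "level (EB1 i j) = i" | "level (EB0 i j l) = i"
| "level (EU1 i l) = i" | "level (EU0 i l) = i" | "level (EWj i j l) = i" | "level (EW0 i l) = i"

lemma ex_mem_setcompr2 [simp]: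
  "(\<exists>x. (\<exists>j k. x = f j k \<and> P j k) \<and> y \<in> x) \<longleftrightarrow> (\<exists>j k. P j k \<and> y \<in> f j k)"
  by blast

lemma BFi_level: "e \<in> BFi n r s t F i \<Longrightarrow> level e = i"
  unfolding BFi_def b1grp_def a0grp_def b0grp_def u1grp_def u0grp_def wjgrp_def w0grp_def
  by (auto split: if_splits)

lemma mem_BF_iff: "e \<in> BF n r s t F \<longleftrightarrow> level e \<in> {1..n} \<and> e \<in> BFi n r s t F (level e)"
  unfolding BF_def using BFi_level by blast

subsection \<open>The potential of a functional edge set\<close>

locale functional_edge_set =
  fixes n r s t :: nat and F :: "edge set"
  assumes r_pos: "r \<ge> 1" and s_pos: "s \<ge> 1" and functional: "functional n r s t F"
begin

definition "\<rho> = reset n r s F"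
definition "b_full i \<longleftrightarrow> b1grp r s i \<subseteq> F"
definition "u_via_b i \<longleftrightarrow> \<rho> \<le> i \<and> b_full i"
definition "base i = (2::real) ^ (2 * i)"

text \<open>At each level m \<ge> i, the vertex u_i pays either nothing (entering the full b-chain, which
  for m \<ge> \<rho> leads to w_{m+1}, whose potential equals that of u_{m+1}) or base m for u^0_m. The vertex w_i
  pays like u_i above \<rho>; at \<rho> and below, its cheapest exit is w^0_i resp. w^j_i followed by
  a^0_{i,j,1}.\<close>
definition "u_level_cost i =
  (if \<rho> < i then (if b_full i then 0 else base i) else if i = \<rho> then 0 else base i)"
definition "y_u i = (\<Sum>m\<in>{i..n}. u_level_cost m)"
definition "y_w i =
  (if \<rho> < i then y_u i else if i = \<rho> then base i + y_u (Suc i) else 2 * base i + y_u (Suc i))"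

fun pot :: "vtx \<Rightarrow> real" where
  "pot Tgt = 0"
| "pot (U i) = y_u i"
| "pot (W i) = y_w i"
| "pot (A i j k) = (if lastA s i j F < k \<and> u_via_b i then y_w (Suc i)
    else 2 * base i + (real k - 1) * eps r s + y_u (Suc i))"
| "pot (B i j) = (if \<rho> \<le> i \<and> lastB r s i F < j then y_w (Suc i)
    else 2 * base i + 1 + (real j - 1) * eps r s + y_u (Suc i))"

lemma base_double: "(2::real) ^ (2 * i + 1) = 2 * base i"
  by (simp add: base_def)

lemma base_eq: "(2::real) ^ (2 * i) = base i"
  by (simp add: base_def)

lemma base_Suc: "base (Suc i) = 4 * base i"
  by (simp add: base_def)

lemma base_pos: "base i > 0"
  by (simp add: base_def)

lemma base_ge_4: "i \<ge> 1 \<Longrightarrow> base i \<ge> 4"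
  using power_increasing[of 2 "2 * i" "2::real"] by (simp add: base_def)

lemma y_u_unfold: "i \<le> n \<Longrightarrow> y_u i = u_level_cost i + y_u (Suc i)"
  unfolding y_u_def by (simp add: sum.atLeast_Suc_atMost)

lemma y_u_top: "y_u (Suc n) = 0"
  unfolding y_u_def by simp

lemma y_w_unfold: "i \<le> n \<Longrightarrow> y_w i = (if \<rho> < i then u_level_cost i + y_u (Suc i)
    else if i = \<rho> then base i + y_u (Suc i) else 2 * base i + y_u (Suc i))"
  by (simp add: y_w_def y_u_unfold)

lemma reset_mem: "\<rho> \<in> {0} \<union> {i \<in> {1..n}. b1grp r s i \<subseteq> F \<and> \<not> a1sq r s i F}"
  unfolding \<rho>_def reset_def by (intro Max_in) auto

lemma reset_le: "\<rho> \<le> n"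
  using reset_mem by auto

lemma reset_b_full_not_a1sq: "\<rho> \<ge> 1 \<Longrightarrow> b_full \<rho> \<and> \<not> a1sq r s \<rho> F"
  using reset_mem by (auto simp: b_full_def)

lemma b_full_at_reset: "1 \<le> i \<Longrightarrow> i = \<rho> \<Longrightarrow> b_full i"
  using reset_b_full_not_a1sq by simp

lemma above_reset_a1sq: "\<rho> < i \<Longrightarrow> i \<le> n \<Longrightarrow> b_full i \<Longrightarrow> a1sq r s i F"
proof (rule ccontr)
  assume i: "\<rho> < i" "i \<le> n" "b_full i" "\<not> a1sq r s i F"
  then have "i \<le> \<rho>"
    unfolding \<rho>_def reset_def by (intro Max_ge) (auto simp: b_full_def)
  with i show False by simp
qed

lemma y_w_Suc_at_or_above_reset: "\<rho> \<le> i \<Longrightarrow> y_w (Suc i) = y_u (Suc i)"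
  by (simp add: y_w_def)

lemma y_w_Suc_below_reset: "i < \<rho> \<Longrightarrow> y_w (Suc i) = y_u (Suc i) + 4 * base i"
  using y_u_unfold[of "Suc i"] reset_le base_Suc[of i]
  by (cases "Suc i = \<rho>") (auto simp: y_w_def u_level_cost_def)

lemma pot_uv: "i \<le> n \<Longrightarrow> pot (uv n (Suc i)) = y_u (Suc i)"
  by (auto simp: uv_def y_u_top)

lemma pot_wv: "i \<le> n \<Longrightarrow> pot (wv n (Suc i)) = y_w (Suc i)"
  using reset_le by (auto simp: wv_def y_u_top y_w_def)

lemma eps_pos: "eps r s > 0"
  using r_pos s_pos by (simp add: eps_def)

lemma eps_offset_lt_1: "j \<le> r * s \<Longrightarrow> (real j - 1) * eps r s < 1"
  using r_pos s_pos by (simp add: eps_def divide_less_eq flip: of_nat_mult)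

lemma eps_offset_nonneg: "1 \<le> j \<Longrightarrow> 0 \<le> (real j - 1) * eps r s"
  using eps_pos by simp

lemma mem_F_edges: "e \<in> F \<Longrightarrow> e \<in> edges n r s t"
  using functional by (auto simp: functional_def)

lemma multiedge_witnesses:
  assumes "i \<in> {1..n}"
  shows "\<exists>l. EU1 i l \<in> F" and "\<exists>l. EU0 i l \<in> F" and "\<exists>l. EW0 i l \<in> F"
    and "j \<in> {1..r} \<Longrightarrow> \<exists>l. EWj i j l \<in> F"
    and "j \<in> {1..r*s} \<Longrightarrow> \<exists>l. EB0 i j l \<in> F"
    and "j \<in> {1..r} \<Longrightarrow> k \<in> {1..s} \<Longrightarrow> \<exists>l. EA0 i j k l \<in> F"
proof -
  have hit: "\<exists>e \<in> M. e \<in> F" if "M \<in> multiedges n r s t" for M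
    using functional that unfolding functional_def by blast
  show "\<exists>l. EU1 i l \<in> F"
    using hit[of "u1grp t i"] assms unfolding multiedges_def u1grp_def by blast
  show "\<exists>l. EU0 i l \<in> F"
    using hit[of "u0grp t i"] assms unfolding multiedges_def u0grp_def by blast
  show "\<exists>l. EW0 i l \<in> F"
    using hit[of "w0grp t i"] assms unfolding multiedges_def w0grp_def by blast
  show "\<exists>l. EWj i j l \<in> F" if "j \<in> {1..r}"
    using hit[of "wjgrp t i j"] assms that unfolding multiedges_def wjgrp_def by blast
  show "\<exists>l. EB0 i j l \<in> F" if "j \<in> {1..r*s}"
    using hit[of "b0grp t i j"] assms that unfolding multiedges_def b0grp_def by blast
  show "\<exists>l. EA0 i j k l \<in> F" if "j \<in> {1..r}" "k \<in> {1..s}"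
    using hit[of "a0grp t i j k"] assms that unfolding multiedges_def a0grp_def by blast
qed

lemmas BFi_unfolded = BFi_def \<rho>_def[symmetric] b_full_def
  a0grp_def b0grp_def b1grp_def u0grp_def u1grp_def w0grp_def wjgrp_def

lemma EA1_mem_BF_iff: "EA1 i j k \<in> BF n r s t F \<longleftrightarrow>
    i \<in> {1..n} \<and> j \<in> {1..r} \<and> k \<in> {1..s} \<and> lastA s i j F < k \<and> u_via_b i"
  unfolding mem_BF_iff u_via_b_def using b_full_at_reset[of i]
  by (auto simp: BFi_unfolded)

lemma EA0_mem_BF_iff: "EA0 i j k l \<in> BF n r s t F \<longleftrightarrow>
    i \<in> {1..n} \<and> j \<in> {1..r} \<and> k \<in> {1..s} \<and> l \<in> {1..t} \<and> EA0 i j k l \<in> F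
    \<and> \<not> (lastA s i j F < k \<and> u_via_b i)"
  unfolding mem_BF_iff u_via_b_def using b_full_at_reset[of i]
  by (auto simp: BFi_unfolded)

lemma EB1_mem_BF_iff: "EB1 i j \<in> BF n r s t F \<longleftrightarrow>
    i \<in> {1..n} \<and> j \<in> {1..r*s} \<and> lastB r s i F < j \<and> \<rho> \<le> i"
  unfolding mem_BF_iff using b_full_at_reset[of i] lastB_eq_0_iff[of r s i F]
  by (auto simp: BFi_unfolded)

lemma EB0_mem_BF_iff: "EB0 i j l \<in> BF n r s t F \<longleftrightarrow>
    i \<in> {1..n} \<and> j \<in> {1..r*s} \<and> l \<in> {1..t} \<and> EB0 i j l \<in> F \<and> \<not> (lastB r s i F < j \<and> \<rho> \<le> i)"
  unfolding mem_BF_iff using b_full_at_reset[of i] lastB_eq_0_iff[of r s i F]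
  by (auto simp: BFi_unfolded)

lemma EU1_mem_BF_iff: "EU1 i l \<in> BF n r s t F \<longleftrightarrow>
    i \<in> {1..n} \<and> l \<in> {1..t} \<and> EU1 i l \<in> F \<and> u_via_b i"
  unfolding mem_BF_iff u_via_b_def using b_full_at_reset[of i]
  by (auto simp: BFi_unfolded)

lemma EU0_mem_BF_iff: "EU0 i l \<in> BF n r s t F \<longleftrightarrow>
    i \<in> {1..n} \<and> l \<in> {1..t} \<and> EU0 i l \<in> F \<and> \<not> u_via_b i"
  unfolding mem_BF_iff u_via_b_def using b_full_at_reset[of i]
  by (auto simp: BFi_unfolded)

lemma EWj_mem_BF_iff: "EWj i j l \<in> BF n r s t F \<longleftrightarrow>
    i \<in> {1..n} \<and> j \<in> {1..r} \<and> l \<in> {1..t} \<and> EWj i j l \<in> F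
    \<and> (i < \<rho> \<or> (\<rho> < i \<and> b_full i \<and> a1grp s i j \<subseteq> F))"
  unfolding mem_BF_iff
  by (auto simp: BFi_unfolded)

lemma EW0_mem_BF_iff: "EW0 i l \<in> BF n r s t F \<longleftrightarrow>
    i \<in> {1..n} \<and> l \<in> {1..t} \<and> EW0 i l \<in> F \<and> (i = \<rho> \<or> (\<rho> < i \<and> \<not> b_full i))"
  unfolding mem_BF_iff
  by (auto simp: BFi_unfolded)

lemma BF_subset: "BF n r s t F \<subseteq> F"
proof
  fix e assume "e \<in> BF n r s t F"
  then show "e \<in> F"
    by (cases e) (auto simp: EA1_mem_BF_iff EA0_mem_BF_iff EB1_mem_BF_iff EB0_mem_BF_iff
        EU1_mem_BF_iff EU0_mem_BF_iff EWj_mem_BF_iff EW0_mem_BF_iff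
        intro: lastA_less_imp_mem lastB_less_imp_mem)
qed

subsection \<open>Reduced costs\<close>

lemma u_level_cost_eq: "1 \<le> i \<Longrightarrow> u_level_cost i = (if u_via_b i then 0 else base i)"
  using b_full_at_reset[of i] by (auto simp: u_level_cost_def u_via_b_def)

lemma u_via_b_iff_lastB: "\<rho> \<le> i \<and> lastB r s i F < 1 \<longleftrightarrow> u_via_b i"
  using lastB_eq_0_iff[of r s i F] by (auto simp: u_via_b_def b_full_def)

definition "certified e \<longleftrightarrow> pot (src e) \<le> cost r s e + pot (tgt n r s e)
  \<and> (cost r s e + pot (tgt n r s e) = pot (src e) \<longleftrightarrow> e \<in> BF n r s t F)"

lemma certified_EA1:
  assumes e: "EA1 i j k \<in> F"
  shows "certified (EA1 i j k)"
proof -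
  from mem_F_edges[OF e] have i: "1 \<le> i" "i \<le> n" "1 \<le> j" "j \<le> r" "1 \<le> k" "k \<le> s"
    by (auto simp: mem_edges_iff)
  have last_ne: "lastA s i j F \<noteq> k" using lastA_neq i e by simp
  show ?thesis
  proof (cases "k < s")
    case True
    then show ?thesis using last_ne i eps_pos unfolding certified_def
      by (auto simp: EA1_mem_BF_iff algebra_simps)
  next
    case False
    then have "k = s" "lastA s i j F < k" using i last_ne lastA_le[of s i j F] by auto
    then show ?thesis
      using i eps_offset_lt_1[of k] eps_offset_nonneg[of k] u_via_b_iff_lastB[of i]
        mult_le_mono1[of 1 r s] r_pos
      unfolding certified_def by (auto simp: EA1_mem_BF_iff base_pos)
  qed
qed

lemma certified_EA0:
  assumes e: "EA0 i j k l \<in> F"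
  shows "certified (EA0 i j k l)"
proof -
  from mem_F_edges[OF e] have i: "1 \<le> i" "i \<le> n" "1 \<le> j" "j \<le> r" "1 \<le> k" "k \<le> s" "1 \<le> l" "l \<le> t"
    by (auto simp: mem_edges_iff)
  then show ?thesis
    using e eps_offset_nonneg[of k] y_w_Suc_at_or_above_reset[of i] base_pos[of i]
    unfolding certified_def
    by (auto simp: EA0_mem_BF_iff u_via_b_def base_double base_eq pot_uv)
qed

lemma certified_EB1:
  assumes e: "EB1 i j \<in> F"
  shows "certified (EB1 i j)"
proof -
  from mem_F_edges[OF e] have i: "1 \<le> i" "i \<le> n" "1 \<le> j" "j \<le> r * s"
    by (auto simp: mem_edges_iff)
  have last_ne: "lastB r s i F \<noteq> j" using lastB_neq i e by simp
  show ?thesis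
  proof (cases "j < r * s")
    case True
    then show ?thesis using last_ne i eps_pos unfolding certified_def
      by (auto simp: EB1_mem_BF_iff algebra_simps)
  next
    case False
    then have "j = r * s" "lastB r s i F < j" using i last_ne lastB_le[of r s i F] by auto
    then show ?thesis
      using i eps_offset_lt_1[of j] base_ge_4[of i]
        y_w_Suc_below_reset[of i] y_w_Suc_at_or_above_reset[of i]
      unfolding certified_def by (auto simp: EB1_mem_BF_iff pot_wv)
  qed
qed

lemma certified_EB0:
  assumes e: "EB0 i j l \<in> F"
  shows "certified (EB0 i j l)"
proof -
  from mem_F_edges[OF e] have i: "1 \<le> i" "i \<le> n" "1 \<le> j" "j \<le> r * s" "1 \<le> l" "l \<le> t"
    by (auto simp: mem_edges_iff)
  then show ?thesis
    using e eps_offset_nonneg[of j] y_w_Suc_at_or_above_reset[of i] base_pos[of i]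
    unfolding certified_def
    by (auto simp: EB0_mem_BF_iff base_double base_eq pot_uv)
qed

lemma certified_EU1:
  assumes e: "EU1 i l \<in> F"
  shows "certified (EU1 i l)"
proof -
  from mem_F_edges[OF e] have i: "1 \<le> i" "i \<le> n" "1 \<le> l" "l \<le> t"
    by (auto simp: mem_edges_iff)
  then show ?thesis
    using e u_via_b_iff_lastB[of i] y_w_Suc_at_or_above_reset[of i] base_pos[of i]
      u_level_cost_eq[of i] y_u_unfold[of i]
    unfolding certified_def by (auto simp: EU1_mem_BF_iff u_via_b_def)
qed

lemma certified_EU0:
  assumes e: "EU0 i l \<in> F"
  shows "certified (EU0 i l)"
proof -
  from mem_F_edges[OF e] have i: "1 \<le> i" "i \<le> n" "1 \<le> l" "l \<le> t"
    by (auto simp: mem_edges_iff)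
  then show ?thesis
    using e base_pos[of i] u_level_cost_eq[of i] y_u_unfold[of i]
    unfolding certified_def by (auto simp: EU0_mem_BF_iff base_eq pot_uv)
qed

lemma certified_EWj:
  assumes e: "EWj i j l \<in> F"
  shows "certified (EWj i j l)"
proof -
  from mem_F_edges[OF e] have i: "1 \<le> i" "i \<le> n" "1 \<le> j" "j \<le> r" "1 \<le> l" "l \<le> t"
    by (auto simp: mem_edges_iff)
  have no_full_a_at_reset: "i = \<rho> \<Longrightarrow> \<not> a1grp s i j \<subseteq> F"
    using reset_b_full_not_a1sq i unfolding a1sq_def by auto
  show ?thesis
    using i e no_full_a_at_reset y_w_Suc_at_or_above_reset[of i] lastA_eq_0_iff[of s i j F]
      base_pos[of i] y_w_unfold[of i]
    unfolding certified_def
    by (auto simp: EWj_mem_BF_iff u_via_b_def u_level_cost_def)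
qed

lemma certified_EW0:
  assumes e: "EW0 i l \<in> F"
  shows "certified (EW0 i l)"
proof -
  from mem_F_edges[OF e] have i: "1 \<le> i" "i \<le> n" "1 \<le> l" "l \<le> t"
    by (auto simp: mem_edges_iff)
  then show ?thesis
    using e y_w_Suc_at_or_above_reset[of i] y_w_Suc_below_reset[of i] base_pos[of i] y_w_unfold[of i]
    unfolding certified_def
    by (auto simp: EW0_mem_BF_iff u_level_cost_def base_eq pot_wv)
qed

lemma certified_edge: "e \<in> F \<Longrightarrow> certified e"
  by (cases e) (auto intro: certified_EA1 certified_EA0 certified_EB1 certified_EB0
      certified_EU1 certified_EU0 certified_EWj certified_EW0)

fun is_vertex :: "vtx \<Rightarrow> bool" where
  "is_vertex Tgt = True"
| "is_vertex (U i) = (i \<in> {1..n})"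
| "is_vertex (W i) = (i \<in> {1..n})"
| "is_vertex (A i j k) = (i \<in> {1..n} \<and> j \<in> {1..r} \<and> k \<in> {1..s})"
| "is_vertex (B i j) = (i \<in> {1..n} \<and> j \<in> {1..r*s})"

definition "level_rank i = (n + 1 - i) * (r * s + s + 3)"

fun rank :: "vtx \<Rightarrow> nat" where
  "rank Tgt = 0"
| "rank (U i) = level_rank i + (r * s + 1)"
| "rank (W i) = level_rank i + (r * s + s + 2)"
| "rank (A i j k) = level_rank i + (r * s + s + 1 - k)"
| "rank (B i j) = level_rank i + (r * s + 1 - j)"

lemma level_rank_Suc: "i \<le> n \<Longrightarrow> level_rank i = level_rank (Suc i) + (r * s + s + 3)"
  unfolding level_rank_def by (simp add: Suc_diff_le)

lemma next_level_vertices: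
  assumes "i \<in> {1..n}"
  shows "is_vertex (uv n (Suc i)) \<and> rank (uv n (Suc i)) < level_rank i"
    and "is_vertex (wv n (Suc i)) \<and> rank (wv n (Suc i)) < level_rank i"
  using assms level_rank_Suc[of i] by (auto simp: uv_def wv_def)

lemma edge_descends:
  assumes "e \<in> F"
  shows "is_vertex (src e) \<and> is_vertex (tgt n r s e) \<and> rank (tgt n r s e) < rank (src e)"
  using mem_F_edges[OF assms] next_level_vertices[of "level e"] r_pos s_pos
  by (cases e) (auto simp: mem_edges_iff)

lemma BF_out_edge_U:
  assumes i: "i \<in> {1..n}"
  shows "\<exists>e \<in> BF n r s t F. src e = U i"
proof (cases "u_via_b i")
  case True
  obtain l where l: "EU1 i l \<in> F" using multiedge_witnesses(1)[OF i] by blast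
  with True i mem_F_edges[OF l] show ?thesis
    by (intro bexI[of _ "EU1 i l"]) (auto simp: EU1_mem_BF_iff mem_edges_iff)
next
  case False
  obtain l where l: "EU0 i l \<in> F" using multiedge_witnesses(2)[OF i] by blast
  with False i mem_F_edges[OF l] show ?thesis
    by (intro bexI[of _ "EU0 i l"]) (auto simp: EU0_mem_BF_iff mem_edges_iff)
qed

lemma BF_out_edge_W:
  assumes i: "i \<in> {1..n}"
  shows "\<exists>e \<in> BF n r s t F. src e = W i"
proof -
  consider "i < \<rho>" | "\<rho> < i" "b_full i" | "i = \<rho> \<or> (\<rho> < i \<and> \<not> b_full i)"
    by linarith
  then show ?thesis
  proof cases
    case 1
    obtain l where l: "EWj i 1 l \<in> F" using multiedge_witnesses(4)[OF i] r_pos by auto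
    with 1 i mem_F_edges[OF l] show ?thesis
      by (intro bexI[of _ "EWj i 1 l"]) (auto simp: EWj_mem_BF_iff mem_edges_iff)
  next
    case 2
    then have "a1sq r s i F" using above_reset_a1sq i by simp
    then obtain j where j: "j \<in> {1..r}" "a1grp s i j \<subseteq> F" unfolding a1sq_def by blast
    obtain l where l: "EWj i j l \<in> F" using multiedge_witnesses(4)[OF i j(1)] by blast
    with 2 i j mem_F_edges[OF l] show ?thesis
      by (intro bexI[of _ "EWj i j l"]) (auto simp: EWj_mem_BF_iff mem_edges_iff)
  next
    case 3
    obtain l where l: "EW0 i l \<in> F" using multiedge_witnesses(3)[OF i] by blast
    with 3 i mem_F_edges[OF l] show ?thesis
      by (intro bexI[of _ "EW0 i l"]) (auto simp: EW0_mem_BF_iff mem_edges_iff)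
  qed
qed

lemma BF_out_edge:
  assumes "is_vertex x" "x \<noteq> Tgt"
  shows "\<exists>e \<in> BF n r s t F. src e = x"
proof (cases x)
  case (U i)
  with assms BF_out_edge_U show ?thesis by simp
next
  case (W i)
  with assms BF_out_edge_W show ?thesis by simp
next
  case (A i j k)
  with assms have i: "i \<in> {1..n}" "j \<in> {1..r}" "k \<in> {1..s}" by auto
  show ?thesis
  proof (cases "lastA s i j F < k \<and> u_via_b i")
    case True
    with i A show ?thesis by (intro bexI[of _ "EA1 i j k"]) (auto simp: EA1_mem_BF_iff)
  next
    case False
    obtain l where l: "EA0 i j k l \<in> F" using multiedge_witnesses(6)[OF i] by blast
    with False i A mem_F_edges[OF l] show ?thesis
      by (intro bexI[of _ "EA0 i j k l"]) (auto simp: EA0_mem_BF_iff mem_edges_iff)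
  qed
next
  case (B i j)
  with assms have i: "i \<in> {1..n}" "j \<in> {1..r*s}" by auto
  show ?thesis
  proof (cases "lastB r s i F < j \<and> \<rho> \<le> i")
    case True
    with i B show ?thesis by (intro bexI[of _ "EB1 i j"]) (auto simp: EB1_mem_BF_iff)
  next
    case False
    obtain l where l: "EB0 i j l \<in> F" using multiedge_witnesses(5)[OF i] by blast
    with False i B mem_F_edges[OF l] show ?thesis
      by (intro bexI[of _ "EB0 i j l"]) (auto simp: EB0_mem_BF_iff mem_edges_iff)
  qed
qed (use assms in simp)

lemma dist_eq_pot:
  assumes "is_vertex x"
  shows "dist n r s F x = ereal (pot x)"
proof (rule dist_eq_potential[where V = is_vertex and rank = rank])
  show "pot (src e) \<le> cost r s e + pot (tgt n r s e)" if "e \<in> F" for e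
    using certified_edge[OF that] by (simp add: certified_def)
  show "\<exists>e \<in> F. src e = v \<and> cost r s e + pot (tgt n r s e) = pot v
      \<and> is_vertex (tgt n r s e) \<and> rank (tgt n r s e) < rank v"
    if v: "is_vertex v" "v \<noteq> Tgt" for v
  proof -
    obtain e where e: "e \<in> BF n r s t F" "src e = v" using BF_out_edge[OF v] by blast
    then have "e \<in> F" using BF_subset by blast
    with e show ?thesis
      using certified_edge[of e] edge_descends[of e] by (auto simp: certified_def)
  qed
qed (use assms in simp_all)

theorem optimal_edges_eq_BF: "optimal_edges n r s F = BF n r s t F"
proof -
  have "optimal_edges n r s F = {e \<in> F. cost r s e + pot (tgt n r s e) = pot (src e)}"
    using dist_eq_pot edge_descends by (intro optimal_edges_eq_tight_edges) blast
  also have "\<dots> = BF n r s t F"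
    using certified_edge BF_subset by (auto simp: certified_def)
  finally show ?thesis .
qed

end

theorem mainTheorem5:
  fixes n r s t :: nat and F :: "edge set"
  assumes "r \<ge> 1" and "s \<ge> 1"
    and "functional n r s t F"
  shows "optimal_edges n r s F = BF n r s t F"
proof -
  interpret functional_edge_set n r s t F
    using assms by unfold_locales
  show ?thesis by (rule optimal_edges_eq_BF)
qed

end
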